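(* Let $g$ be any classifier (possibly depending on the data) and $\hat\eta$ an estimator of $\eta$ constructed on $\mathcal{D}_n$, and suppose $\mathbb{E}_{X\mid S=s}[\hat\eta(X,s)]>0$ and $\hat{\mathbb{E}}_{X\mid S=s}[\hat\eta(X,s)]>0$ for $s\in\{0,1\}$. Then almost surely $$\Delta(g,\mathbb{P})\le \hat\Delta(g,\mathbb{P})+\sum_{s\in\{0,1\}}\Bigg(2\frac{\mathbb{E}_{X\mid S=s}|\eta(X,s)-\hat\eta(X,s)|}{\mathbb{P}(Y=1\mid S=s)}+\frac{\big|(\mathbb{E}_{X\mid S=s}-\hat{\mathbb{E}}_{X\mid S=s})[\hat\eta(X,s)g(X,s)]\big|}{\mathbb{E}_{X\mid S=s}[\hat\eta(X,s)]}+\frac{\big|(\hat{\mathbb{E}}_{X\mid S=s}-\mathbb{E}_{X\mid S=s})[\hat\eta(X,s)]\big|}{\mathbb{E}_{X\mid S=s}[\hat\eta(X,s)]}\Bigg).$$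
   Context: Let $(X,S,Y)$ be a random tuple in $\mathbb{R}^d\times\{0,1\}\times\{0,1\}$ with joint distribution $\mathbb{P}$, where $\mathbb{P}(S=1)\in(0,1)$ and $\mathbb{P}(Y=1\mid S=s)>0$ for $s\in\{0,1\}$. A classifier is a measurable map $g:\mathbb{R}^d\times\{0,1\}\to\{0,1\}$. The regression function is $\eta(x,s)=\mathbb{P}(Y=1\mid X=x,S=s)$; $\mathbb{E}_{X\mid S=s}$ is expectation w.r.t. the conditional law of $X$ given $S=s$ (over a fresh independent $X$, with data held fixed). Unfairness: $\Delta(g,\mathbb{P})=|\mathbb{P}(g(X,S)=1\mid S=1,Y=1)-\mathbb{P}(g(X,S)=1\mid S=0,Y=1)|$. Data: labeled $\mathcal{D}_n$ i.i.d. from $\mathbb{P}$ and independent unlabeled $\mathcal{D}_N=\{(X_i,S_i)\}$ i.i.d. from the law of $(X,S)$, containing points of both groups; $\hat\eta:\mathbb{R}^d\times\{0,1\}\to[0,1]$ is built from $\mathcal{D}_n$ only; $\hat{\mathbb{E}}_{X\mid S=s}$ is expectation w.r.t. the empirical distribution of $\{X:(X,S)\in\mathcal{D}_N,S=s\}$. Empirical unfairness: $$\hat\Delta(g,\mathbb{P})=\Big|\frac{\hat{\mathbb{E}}_{X\mid S=1}[\hat\eta(X,1)g(X,1)]}{\hat{\mathbb{E}}_{X\mid S=1}[\hat\eta(X,1)]}-\frac{\hat{\mathbb{E}}_{X\mid S=0}[\hat\eta(X,0)g(X,0)]}{\hat{\mathbb{E}}_{X\mid S=0}[\hat\eta(X,0)]}\Big|.$$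 *)

theory Defs
  imports "HOL-Probability.Probability"
begin

text \<open>Outcomes are triples (X, S, Y) with X in the feature space, S the sensitive
  attribute (True = 1) and Y the label (True = 1).\<close>

definition cprob :: "('x \<times> bool \<times> bool) measure \<Rightarrow> (('x \<times> bool \<times> bool) \<Rightarrow> bool)
    \<Rightarrow> (('x \<times> bool \<times> bool) \<Rightarrow> bool) \<Rightarrow> real" where
  "cprob M A B = measure M {\<omega> \<in> space M. A \<omega> \<and> B \<omega>} / measure M {\<omega> \<in> space M. B \<omega>}"

definition cond_exp_S :: "('x \<times> bool \<times> bool) measure \<Rightarrow> bool \<Rightarrow> ('x \<Rightarrow> real) \<Rightarrow> real" where
  "cond_exp_S M s f =
     (\<integral>\<omega>. (if fst (snd \<omega>) = s then f (fst \<omega>) else 0) \<partial>M)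
       / measure M {\<omega> \<in> space M. fst (snd \<omega>) = s}"

text \<open>\<eta> is (a version of) the regression function P(Y=1 | X=x, S=s).\<close>
definition regression_function :: "('x::topological_space \<times> bool \<times> bool) measure
    \<Rightarrow> ('x \<Rightarrow> bool \<Rightarrow> real) \<Rightarrow> bool" where
  "regression_function M \<eta> \<longleftrightarrow>
     (\<forall>s. (\<lambda>x. \<eta> x s) \<in> borel_measurable borel) \<and>
     integrable M (\<lambda>\<omega>. \<eta> (fst \<omega>) (fst (snd \<omega>))) \<and>
     (\<forall>A \<in> sets borel. \<forall>s.
        (\<integral>\<omega>. (if fst \<omega> \<in> A \<and> fst (snd \<omega>) = s \<and> snd (snd \<omega>) then 1 else 0) \<partial>M)
      = (\<integral>\<omega>. (if fst \<omega> \<in> A \<and> fst (snd \<omega>) = s then \<eta> (fst \<omega>) (fst (snd \<omega>)) else 0) \<partial>M))"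

definition unfairness :: "('x \<times> bool \<times> bool) measure \<Rightarrow> ('x \<Rightarrow> bool \<Rightarrow> bool) \<Rightarrow> real" where
  "unfairness M g =
     \<bar>cprob M (\<lambda>\<omega>. g (fst \<omega>) (fst (snd \<omega>))) (\<lambda>\<omega>. fst (snd \<omega>) \<and> snd (snd \<omega>))
      - cprob M (\<lambda>\<omega>. g (fst \<omega>) (fst (snd \<omega>))) (\<lambda>\<omega>. \<not> fst (snd \<omega>) \<and> snd (snd \<omega>))\<bar>"

definition emp_exp :: "('x \<times> bool) list \<Rightarrow> bool \<Rightarrow> ('x \<Rightarrow> real) \<Rightarrow> real" where
  "emp_exp DN s f =
     (\<Sum>p\<leftarrow>filter (\<lambda>p. snd p = s) DN. f (fst p)) / real (length (filter (\<lambda>p. snd p = s) DN))"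

definition emp_unfairness :: "('x \<times> bool) list \<Rightarrow> ('x \<Rightarrow> bool \<Rightarrow> real) \<Rightarrow> ('x \<Rightarrow> bool \<Rightarrow> bool) \<Rightarrow> real" where
  "emp_unfairness DN \<eta>h g =
     \<bar>emp_exp DN True (\<lambda>x. \<eta>h x True * of_bool (g x True)) / emp_exp DN True (\<lambda>x. \<eta>h x True)
      - emp_exp DN False (\<lambda>x. \<eta>h x False * of_bool (g x False)) / emp_exp DN False (\<lambda>x. \<eta>h x False)\<bar>"

end

theory Submission
  imports Defs
begin

text \<open>By the defining property of the regression function, the true positive rate of
  group s is a(s) = E_s[\<eta> g] / E_s[\<eta>]. Compare it with b(s) = E_s[\<eta>h g] / E_s[\<eta>h] and with
  its empirical counterpart. Every comparison of two ratios x/y and u/v with 0 \<le> u \<le> v is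
  controlled by (|x - u| + |y - v|) / y, because u/v lies in [0, 1]. From a(s) to b(s)
  numerator and denominator move by at most E_s|\<eta> - \<eta>h|; from b(s) to the empirical ratio
  they move by the estimation errors of E_s. The triangle inequality across the two groups
  concludes.\<close>

lemma closed_sensitive_group:
  "closed {\<omega>::'a::topological_space \<times> bool \<times> bool. fst (snd \<omega>) = s}"
  by (intro closed_Collect_eq continuous_intros)

lemma measurable_restrict_S:
  fixes M :: "('a::second_countable_topology \<times> bool \<times> bool) measure" and h :: "'a \<Rightarrow> real"
  assumes "sets M = sets borel" and "h \<in> borel_measurable borel"
  shows "(\<lambda>\<omega>. if fst (snd \<omega>) = s then h (fst \<omega>) else 0) \<in> borel_measurable M"
proof -
  have "(\<lambda>\<omega>::'a \<times> bool \<times> bool. h (fst \<omega>)) \<in> borel_measurable borel"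
    using measurable_compose[OF borel_measurable_continuous_onI[OF continuous_on_fst[OF continuous_on_id]] assms(2)]
    by (simp add: o_def)
  then have "(\<lambda>\<omega>::'a \<times> bool \<times> bool. if \<omega> \<in> {\<omega>. fst (snd \<omega>) = s} then h (fst \<omega>) else 0) \<in> borel_measurable borel"
    using closed_sensitive_group[of s] by (intro measurable_If_set borel_closed) auto
  then have "(\<lambda>\<omega>::'a \<times> bool \<times> bool. if fst (snd \<omega>) = s then h (fst \<omega>) else 0) \<in> borel_measurable borel"
    by simp
  then show ?thesis
    by (subst measurable_cong_sets[OF assms(1) refl])
qed

lemma integrable_restrict_S:
  fixes M :: "('a::second_countable_topology \<times> bool \<times> bool) measure" and h :: "'a \<Rightarrow> real"
  assumes "sets M = sets borel" and "integrable M F" and "h \<in> borel_measurable borel"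
    and "\<And>\<omega>. \<omega> \<in> space M \<Longrightarrow> fst (snd \<omega>) = s \<Longrightarrow> \<bar>h (fst \<omega>)\<bar> \<le> F \<omega>"
  shows "integrable M (\<lambda>\<omega>. if fst (snd \<omega>) = s then h (fst \<omega>) else 0)"
  using assms(4) by (intro Bochner_Integration.integrable_bound[OF assms(2) measurable_restrict_S[OF assms(1,3)]])
    (auto intro!: AE_I2 order.trans[OF _ abs_ge_self])

lemma cond_exp_S_abs_diff_le:
  fixes M :: "('a \<times> bool \<times> bool) measure"
  assumes "integrable M (\<lambda>\<omega>. if fst (snd \<omega>) = s then f (fst \<omega>) else 0)"
    and "integrable M (\<lambda>\<omega>. if fst (snd \<omega>) = s then h (fst \<omega>) else 0)"
    and "integrable M (\<lambda>\<omega>. if fst (snd \<omega>) = s then k (fst \<omega>) else 0)"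
    and "\<And>x. \<bar>f x - h x\<bar> \<le> k x"
  shows "\<bar>cond_exp_S M s f - cond_exp_S M s h\<bar> \<le> cond_exp_S M s k"
proof -
  let ?r = "\<lambda>f \<omega>. if fst (snd \<omega>) = s then f (fst \<omega>) else (0::real)"
  have "\<bar>integral\<^sup>L M (?r f) - integral\<^sup>L M (?r h)\<bar> = \<bar>\<integral>\<omega>. ?r f \<omega> - ?r h \<omega> \<partial>M\<bar>"
    using assms(1,2) by simp
  also have "\<dots> \<le> (\<integral>\<omega>. \<bar>?r f \<omega> - ?r h \<omega>\<bar> \<partial>M)"
    using integral_norm_bound[of M "\<lambda>\<omega>. ?r f \<omega> - ?r h \<omega>"] by simp
  also have "\<dots> \<le> integral\<^sup>L M (?r k)"
    using assms by (intro integral_mono) auto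
  finally show ?thesis
    unfolding cond_exp_S_def by (simp add: diff_divide_distrib[symmetric] divide_right_mono)
qed

lemma cond_exp_S_mono:
  fixes M :: "('a \<times> bool \<times> bool) measure"
  assumes "integrable M (\<lambda>\<omega>. if fst (snd \<omega>) = s then f (fst \<omega>) else 0)"
    and "integrable M (\<lambda>\<omega>. if fst (snd \<omega>) = s then h (fst \<omega>) else 0)"
    and "\<And>x. f x \<le> h x"
  shows "cond_exp_S M s f \<le> cond_exp_S M s h"
  unfolding cond_exp_S_def using assms by (intro divide_right_mono integral_mono) auto

lemma cond_exp_S_nonneg:
  "(\<And>x. 0 \<le> f x) \<Longrightarrow> 0 \<le> cond_exp_S M s f"
  unfolding cond_exp_S_def by (intro divide_nonneg_nonneg integral_nonneg) auto

lemma emp_exp_nonneg: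
  "(\<And>x. 0 \<le> f x) \<Longrightarrow> 0 \<le> emp_exp DN s f"
  unfolding emp_exp_def by (intro divide_nonneg_nonneg sum_list_nonneg) auto

lemma emp_exp_mono:
  "(\<And>x. f x \<le> h x) \<Longrightarrow> emp_exp DN s f \<le> emp_exp DN s h"
  unfolding emp_exp_def by (intro divide_right_mono sum_list_mono) auto

lemma abs_divide_diff_le:
  fixes a b c d :: real
  \<comment> \<open>d = 0 is allowed: then c = 0 and c / d = 0.\<close>
  assumes "0 < b" and "0 \<le> c" and "c \<le> d"
  shows "\<bar>a / b - c / d\<bar> \<le> (\<bar>a - c\<bar> + \<bar>b - d\<bar>) / b"
proof -
  have q: "0 \<le> c / d" "c / d \<le> 1"
    using assms by (auto simp: divide_le_eq_1)
  have "a / b - c / d = ((a - c) + c / d * (d - b)) / b"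
    using assms by (cases "d = 0") (auto simp: field_simps)
  also have "\<bar>\<dots>\<bar> \<le> (\<bar>a - c\<bar> + c / d * \<bar>d - b\<bar>) / b"
    using assms q by (auto simp: abs_mult intro!: divide_right_mono order.trans[OF abs_triangle_ineq])
  also have "\<dots> \<le> (\<bar>a - c\<bar> + \<bar>b - d\<bar>) / b"
    using assms q mult_left_le_one_le[of "\<bar>d - b\<bar>" "c / d"]
    by (intro divide_right_mono add_left_mono) (auto simp: abs_minus_commute)
  finally show ?thesis .
qed

lemma integrable_restrict_S_regression:
  fixes M :: "('a::second_countable_topology \<times> bool \<times> bool) measure"
  assumes "finite_measure M" and "sets M = sets borel" and "regression_function M \<eta>"
    and "h \<in> borel_measurable borel" and "\<And>x. \<bar>h x\<bar> \<le> \<bar>\<eta> x s\<bar> + 1"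
  shows "integrable M (\<lambda>\<omega>. if fst (snd \<omega>) = s then h (fst \<omega>) else 0)"
proof (rule integrable_restrict_S[OF assms(2) _ assms(4)])
  interpret finite_measure M by fact
  show "integrable M (\<lambda>\<omega>. \<bar>\<eta> (fst \<omega>) (fst (snd \<omega>))\<bar> + 1)"
    using assms(3) unfolding regression_function_def by auto
qed (use assms(5) in auto)

lemma measure_positive_label_eq_integral:
  assumes "regression_function M \<eta>" and "A \<in> sets borel"
  shows "measure M {\<omega> \<in> space M. fst \<omega> \<in> A \<and> fst (snd \<omega>) = s \<and> snd (snd \<omega>)}
    = (\<integral>\<omega>. (if fst (snd \<omega>) = s then \<eta> (fst \<omega>) s * of_bool (fst \<omega> \<in> A) else 0) \<partial>M)"
proof -
  have "measure M {\<omega> \<in> space M. fst \<omega> \<in> A \<and> fst (snd \<omega>) = s \<and> snd (snd \<omega>)}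
      = (\<integral>\<omega>. indicator {\<omega>. fst \<omega> \<in> A \<and> fst (snd \<omega>) = s \<and> snd (snd \<omega>)} \<omega> \<partial>M)"
    by (simp add: Int_def conj_commute)
  also have "\<dots> = (\<integral>\<omega>. (if fst \<omega> \<in> A \<and> fst (snd \<omega>) = s \<and> snd (snd \<omega>) then 1 else 0) \<partial>M)"
    by (rule Bochner_Integration.integral_cong) (auto simp: indicator_def)
  also have "\<dots> = (\<integral>\<omega>. (if fst \<omega> \<in> A \<and> fst (snd \<omega>) = s then \<eta> (fst \<omega>) (fst (snd \<omega>)) else 0) \<partial>M)"
    using assms unfolding regression_function_def by blast
  also have "\<dots> = (\<integral>\<omega>. (if fst (snd \<omega>) = s then \<eta> (fst \<omega>) s * of_bool (fst \<omega> \<in> A) else 0) \<partial>M)"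
    by (rule Bochner_Integration.integral_cong) auto
  finally show ?thesis .
qed

lemma cprob_label_given_group:
  assumes "regression_function M \<eta>"
  shows "cprob M (\<lambda>\<omega>. snd (snd \<omega>)) (\<lambda>\<omega>. fst (snd \<omega>) = s) = cond_exp_S M s (\<lambda>x. \<eta> x s)"
proof -
  have "{\<omega> \<in> space M. snd (snd \<omega>) \<and> fst (snd \<omega>) = s}
      = {\<omega> \<in> space M. fst \<omega> \<in> UNIV \<and> fst (snd \<omega>) = s \<and> snd (snd \<omega>)}"
    by auto
  then show ?thesis
    unfolding cprob_def cond_exp_S_def using measure_positive_label_eq_integral[OF assms, of UNIV s] by (simp cong: if_cong)
qed

lemma cprob_classifier_given_group_label:
  assumes "regression_function M \<eta>" and "{x. g x s} \<in> sets borel"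
    and "measure M {\<omega> \<in> space M. fst (snd \<omega>) = s} \<noteq> 0"
  shows "cprob M (\<lambda>\<omega>. g (fst \<omega>) (fst (snd \<omega>))) (\<lambda>\<omega>. fst (snd \<omega>) = s \<and> snd (snd \<omega>))
    = cond_exp_S M s (\<lambda>x. \<eta> x s * of_bool (g x s)) / cond_exp_S M s (\<lambda>x. \<eta> x s)"
proof -
  have "{\<omega> \<in> space M. g (fst \<omega>) (fst (snd \<omega>)) \<and> fst (snd \<omega>) = s \<and> snd (snd \<omega>)}
      = {\<omega> \<in> space M. fst \<omega> \<in> {x. g x s} \<and> fst (snd \<omega>) = s \<and> snd (snd \<omega>)}"
    and "{\<omega> \<in> space M. fst (snd \<omega>) = s \<and> snd (snd \<omega>)}
      = {\<omega> \<in> space M. fst \<omega> \<in> UNIV \<and> fst (snd \<omega>) = s \<and> snd (snd \<omega>)}"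
    by auto
  then show ?thesis
    unfolding cprob_def cond_exp_S_def
    using measure_positive_label_eq_integral[OF assms(1), of UNIV s] measure_positive_label_eq_integral[OF assms(1,2), of s] assms(3)
    by (simp cong: if_cong)
qed

lemma group_true_positive_rate_error:
  fixes M :: "('a::second_countable_topology \<times> bool \<times> bool) measure"
  assumes "prob_space M" and "sets M = sets borel" and "regression_function M \<eta>"
    and "(\<lambda>x. \<eta>h x s) \<in> borel_measurable borel" and "\<And>x. 0 \<le> \<eta>h x s \<and> \<eta>h x s \<le> 1"
    and "{x. g x s} \<in> sets borel"
    and "cprob M (\<lambda>\<omega>. snd (snd \<omega>)) (\<lambda>\<omega>. fst (snd \<omega>) = s) > 0"
    and "cond_exp_S M s (\<lambda>x. \<eta>h x s) > 0"
  shows "\<bar>cprob M (\<lambda>\<omega>. g (fst \<omega>) (fst (snd \<omega>))) (\<lambda>\<omega>. fst (snd \<omega>) = s \<and> snd (snd \<omega>))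
      - emp_exp DN s (\<lambda>x. \<eta>h x s * of_bool (g x s)) / emp_exp DN s (\<lambda>x. \<eta>h x s)\<bar>
    \<le> 2 * cond_exp_S M s (\<lambda>x. \<bar>\<eta> x s - \<eta>h x s\<bar>)
          / cprob M (\<lambda>\<omega>. snd (snd \<omega>)) (\<lambda>\<omega>. fst (snd \<omega>) = s)
      + \<bar>cond_exp_S M s (\<lambda>x. \<eta>h x s * of_bool (g x s))
          - emp_exp DN s (\<lambda>x. \<eta>h x s * of_bool (g x s))\<bar>
          / cond_exp_S M s (\<lambda>x. \<eta>h x s)
      + \<bar>emp_exp DN s (\<lambda>x. \<eta>h x s) - cond_exp_S M s (\<lambda>x. \<eta>h x s)\<bar>
          / cond_exp_S M s (\<lambda>x. \<eta>h x s)"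
proof -
  interpret prob_space M by fact
  let ?E = "\<lambda>f. cond_exp_S M s f" and ?En = "\<lambda>f. emp_exp DN s f"
  let ?\<eta> = "\<lambda>x. \<eta> x s" and ?\<eta>h = "\<lambda>x. \<eta>h x s" and ?w = "\<lambda>x. of_bool (g x s) :: real"
  have P_group: "measure M {\<omega> \<in> space M. fst (snd \<omega>) = s} \<noteq> 0"
    using assms(7) by (auto simp: cprob_def)
  have [measurable]: "?\<eta> \<in> borel_measurable borel"
    using assms(3) by (simp add: regression_function_def)
  have [measurable]: "?w \<in> borel_measurable borel"
  proof -
    have "?w = indicator {x. g x s}"
      by (auto simp: indicator_def fun_eq_iff)
    then show ?thesis
      using borel_measurable_indicator[OF assms(6)] by simp
  qed
  note integrable_dominated =
    integrable_restrict_S_regression[OF finite_measure_axioms assms(2,3), of _ s]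
  have \<eta>h_dominated: "\<bar>?\<eta>h x\<bar> \<le> \<bar>?\<eta> x\<bar> + 1" "\<bar>?\<eta> x - ?\<eta>h x\<bar> \<le> \<bar>?\<eta> x\<bar> + 1" for x
    using assms(5)[of x] by auto
  have i\<eta>: "integrable M (\<lambda>\<omega>. if fst (snd \<omega>) = s then ?\<eta> (fst \<omega>) else 0)"
    and i\<eta>w: "integrable M (\<lambda>\<omega>. if fst (snd \<omega>) = s then ?\<eta> (fst \<omega>) * ?w (fst \<omega>) else 0)"
    and i\<eta>h: "integrable M (\<lambda>\<omega>. if fst (snd \<omega>) = s then ?\<eta>h (fst \<omega>) else 0)"
    and i\<eta>hw: "integrable M (\<lambda>\<omega>. if fst (snd \<omega>) = s then ?\<eta>h (fst \<omega>) * ?w (fst \<omega>) else 0)"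
    and idiff: "integrable M (\<lambda>\<omega>. if fst (snd \<omega>) = s then \<bar>?\<eta> (fst \<omega>) - ?\<eta>h (fst \<omega>)\<bar> else 0)"
    using assms(4) \<eta>h_dominated by (auto intro!: integrable_dominated simp: abs_mult)
  let ?a = "?E (\<lambda>x. ?\<eta> x * ?w x) / ?E ?\<eta>" and ?b = "?E (\<lambda>x. ?\<eta>h x * ?w x) / ?E ?\<eta>h"
    and ?ah = "?En (\<lambda>x. ?\<eta>h x * ?w x) / ?En ?\<eta>h"
  have "\<bar>?E (\<lambda>x. ?\<eta> x * ?w x) - ?E (\<lambda>x. ?\<eta>h x * ?w x)\<bar> \<le> ?E (\<lambda>x. \<bar>?\<eta> x - ?\<eta>h x\<bar>)"
    using i\<eta>w i\<eta>hw idiff by (rule cond_exp_S_abs_diff_le) (simp add: abs_mult flip: left_diff_distrib)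
  moreover have "\<bar>?E ?\<eta> - ?E ?\<eta>h\<bar> \<le> ?E (\<lambda>x. \<bar>?\<eta> x - ?\<eta>h x\<bar>)"
    using i\<eta> i\<eta>h idiff by (rule cond_exp_S_abs_diff_le) simp
  moreover have "0 \<le> ?E (\<lambda>x. ?\<eta>h x * ?w x)" "?E (\<lambda>x. ?\<eta>h x * ?w x) \<le> ?E ?\<eta>h"
    using assms(5) i\<eta>hw i\<eta>h by (auto intro!: cond_exp_S_nonneg cond_exp_S_mono)
  moreover have "0 < ?E ?\<eta>"
    using assms(7) cprob_label_given_group[OF assms(3)] by simp
  ultimately have a_b: "\<bar>?a - ?b\<bar> \<le> 2 * ?E (\<lambda>x. \<bar>?\<eta> x - ?\<eta>h x\<bar>) / ?E ?\<eta>"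
    using abs_divide_diff_le[of "?E ?\<eta>" "?E (\<lambda>x. ?\<eta>h x * ?w x)" "?E ?\<eta>h"
        "?E (\<lambda>x. ?\<eta> x * ?w x)"]
    by (smt (verit) divide_right_mono)
  have "0 \<le> ?En (\<lambda>x. ?\<eta>h x * ?w x)" "?En (\<lambda>x. ?\<eta>h x * ?w x) \<le> ?En ?\<eta>h"
    using assms(5) by (auto intro!: emp_exp_nonneg emp_exp_mono)
  then have b_ah: "\<bar>?b - ?ah\<bar> \<le> \<bar>?E (\<lambda>x. ?\<eta>h x * ?w x) - ?En (\<lambda>x. ?\<eta>h x * ?w x)\<bar> / ?E ?\<eta>h
      + \<bar>?En ?\<eta>h - ?E ?\<eta>h\<bar> / ?E ?\<eta>h"
    using abs_divide_diff_le[of "?E ?\<eta>h" "?En (\<lambda>x. ?\<eta>h x * ?w x)" "?En ?\<eta>h"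
        "?E (\<lambda>x. ?\<eta>h x * ?w x)"] assms(8)
    by (simp add: add_divide_distrib abs_minus_commute)
  show ?thesis
    unfolding cprob_classifier_given_group_label[where g = g and s = s, OF assms(3,6) P_group]
      cprob_label_given_group[OF assms(3)]
    using a_b b_ah by linarith
qed

theorem mainTheorem4:
  fixes M :: "((real ^ ('d::finite)) \<times> bool \<times> bool) measure"
    and \<eta> \<eta>h :: "(real ^ ('d::finite)) \<Rightarrow> bool \<Rightarrow> real"
    and g :: "(real ^ ('d::finite)) \<Rightarrow> bool \<Rightarrow> bool"
    and DN :: "((real ^ ('d::finite)) \<times> bool) list"
  assumes "prob_space M"
    and "sets M = sets borel"
    and "0 < measure M {\<omega> \<in> space M. fst (snd \<omega>)}"
    and "measure M {\<omega> \<in> space M. fst (snd \<omega>)} < 1"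
    and "\<forall>s. cprob M (\<lambda>\<omega>. snd (snd \<omega>)) (\<lambda>\<omega>. fst (snd \<omega>) = s) > 0"
    and "regression_function M \<eta>"
    and "\<forall>s. (\<lambda>x. \<eta>h x s) \<in> borel_measurable borel"
    and "\<forall>x s. 0 \<le> \<eta>h x s \<and> \<eta>h x s \<le> 1"
    and "\<forall>s. {x. g x s} \<in> sets borel"
    and "\<forall>s. \<exists>p \<in> set DN. snd p = s"
    and "\<forall>s. cond_exp_S M s (\<lambda>x. \<eta>h x s) > 0"
    and "\<forall>s. emp_exp DN s (\<lambda>x. \<eta>h x s) > 0"
  shows "unfairness M g \<le> emp_unfairness DN \<eta>h g +
     (\<Sum>s\<in>UNIV.
        2 * cond_exp_S M s (\<lambda>x. \<bar>\<eta> x s - \<eta>h x s\<bar>)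
          / cprob M (\<lambda>\<omega>. snd (snd \<omega>)) (\<lambda>\<omega>. fst (snd \<omega>) = s)
      + \<bar>cond_exp_S M s (\<lambda>x. \<eta>h x s * of_bool (g x s))
          - emp_exp DN s (\<lambda>x. \<eta>h x s * of_bool (g x s))\<bar>
          / cond_exp_S M s (\<lambda>x. \<eta>h x s)
      + \<bar>emp_exp DN s (\<lambda>x. \<eta>h x s) - cond_exp_S M s (\<lambda>x. \<eta>h x s)\<bar>
          / cond_exp_S M s (\<lambda>x. \<eta>h x s))"
proof -
  note group = group_true_positive_rate_error[where \<eta>h = \<eta>h and g = g and DN = DN,
      OF assms(1,2,6) assms(7)[rule_format] assms(8)[rule_format] assms(9)[rule_format]
      assms(5)[rule_format] assms(11)[rule_format]]
  from group[of True] group[of False] show ?thesis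
    unfolding unfairness_def emp_unfairness_def by (simp add: UNIV_bool) linarith
qed

end
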